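(* Let $(M,J)$ be a closed almost complex manifold. $J$ being pure is equivalent to $\iota_{1,1}$ being injective, which is also equivalent to $\iota_{(2,0),(0,2)}$ being injective. If $J$ is full then both $\iota_{1,1}$ and $\iota_{(2,0),(0,2)}$ are surjective. Consequently, if $J$ is pure and full, then both $\iota_{1,1}$ and $\iota_{(2,0),(0,2)}$ are isomorphisms.
   Context: $\mathcal E_2(M)$ is the space of real 2-currents (continuous linear functionals on smooth real 2-forms with the $C^\infty$ topology), with boundary operator $d$ dual to exterior derivative. It splits as $\mathcal E_{1,1}\oplus\mathcal E_{(2,0),(0,2)}$, where $\mathcal E_{1,1}$ (resp. $\mathcal E_{(2,0),(0,2)}$) consists of currents vanishing on all real 2-forms $\alpha$ with $\alpha(Jv,Jw)=-\alpha(v,w)$ (resp. $=\alpha(v,w)$); $\pi_{1,1},\pi_{(2,0),(0,2)}$ are the projections. $\mathcal Z\subset\mathcal E_2(M)$ is the space of closed 2-currents and $\mathcal B=d\mathcal E_3(M)$ the boundaries; for $S=(1,1)$ or $(2,0),(0,2)$, $\mathcal Z_S=\mathcal Z\cap\mathcal E_S$, $\mathcal B_S=\mathcal B\cap\mathcal E_S$, and $\iota_S:\mathcal Z_S/\mathcal B_S\to\pi_S\mathcal Z/\pi_S\mathcal B$ is induced by inclusion. $H^J_S(M)_{\mathbb R}=\mathcal Z_S/\mathcal B_S$, viewed as a subspace of de Rham homology $H_2(M;\mathbb R)=\mathcal Z/\mathcal B$. $J$ is pure if $H^J_{1,1}(M)_{\mathbb R}\cap H^J_{(2,0),(0,2)}(M)_{\mathbb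 R}=0$, and full if $H^J_{1,1}(M)_{\mathbb R}+H^J_{(2,0),(0,2)}(M)_{\mathbb R}=H_2(M;\mathbb R)$. *)

theory Defs
  imports "HOL-Analysis.Analysis"
begin

text \<open>The real vector space 'a plays the
role of the 2-currents E_2(M); bd3 :: 'c \<Rightarrow> 'a is the boundary operator on 3-currents
(so the boundaries are B = range bd3) and bd2 :: 'a \<Rightarrow> 'b the boundary operator on
2-currents (so the cycles are Z = ker bd2).  The type decomposition
E_2 = E_{1,1} \<oplus> E_{(2,0),(0,2)} is given by the linear projection p = pi_{1,1},
and pi_{(2,0),(0,2)} = id - p.  For a projection q, E_q = {x. q x = x}.\<close>

definition coset :: "'a::ab_group_add set \<Rightarrow> 'a \<Rightarrow> 'a set" where
  "coset U x = {x + u | u. u \<in> U}"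

text \<open>V/U as the set of cosets of U meeting V (for subspaces U \<subseteq> V).\<close>
definition quot :: "'a::ab_group_add set \<Rightarrow> 'a set \<Rightarrow> 'a set set" where
  "quot V U = coset U ` V"

definition setplus :: "'a::ab_group_add set \<Rightarrow> 'a set \<Rightarrow> 'a set" where
  "setplus A C = {a + c | a c. a \<in> A \<and> c \<in> C}"

definition cycles :: "('a \<Rightarrow> 'b::zero) \<Rightarrow> 'a set" where
  "cycles bd2 = {z. bd2 z = 0}"

definition boundaries :: "('c \<Rightarrow> 'a) \<Rightarrow> 'a set" where
  "boundaries bd3 = range bd3"

definition Zs :: "('a \<Rightarrow> 'b::zero) \<Rightarrow> ('a \<Rightarrow> 'a) \<Rightarrow> 'a set" where
  "Zs bd2 q = {z \<in> cycles bd2. q z = z}"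

definition Bs :: "('c \<Rightarrow> 'a) \<Rightarrow> ('a \<Rightarrow> 'a) \<Rightarrow> 'a set" where
  "Bs bd3 q = {b \<in> boundaries bd3. q b = b}"

text \<open>iota_S : Z_S/B_S \<rightarrow> pi_S Z / pi_S B, sending the coset z + B_S to
z + pi_S B (= (z + B_S) + pi_S B, well defined since B_S \<subseteq> pi_S B).\<close>
definition iota :: "('c \<Rightarrow> 'a::ab_group_add) \<Rightarrow> ('a \<Rightarrow> 'a) \<Rightarrow> 'a set \<Rightarrow> 'a set" where
  "iota bd3 q C = setplus C (q ` boundaries bd3)"

definition iota_domain :: "('a::ab_group_add \<Rightarrow> 'b::zero) \<Rightarrow> ('c \<Rightarrow> 'a) \<Rightarrow> ('a \<Rightarrow> 'a) \<Rightarrow> 'a set set" where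
  "iota_domain bd2 bd3 q = quot (Zs bd2 q) (Bs bd3 q)"

definition iota_codomain :: "('a::ab_group_add \<Rightarrow> 'b::zero) \<Rightarrow> ('c \<Rightarrow> 'a) \<Rightarrow> ('a \<Rightarrow> 'a) \<Rightarrow> 'a set set" where
  "iota_codomain bd2 bd3 q = quot (q ` cycles bd2) (q ` boundaries bd3)"

definition iota_injective where
  "iota_injective bd2 bd3 q \<longleftrightarrow> inj_on (iota bd3 q) (iota_domain bd2 bd3 q)"

definition iota_surjective where
  "iota_surjective bd2 bd3 q \<longleftrightarrow> iota bd3 q ` iota_domain bd2 bd3 q = iota_codomain bd2 bd3 q"

definition iota_iso where
  "iota_iso bd2 bd3 q \<longleftrightarrow> iota_injective bd2 bd3 q \<and> iota_surjective bd2 bd3 q"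

text \<open>H_S = Z_S/B_S viewed inside H_2 = Z/B (image of Z_S in Z/B).\<close>
definition Hs :: "('a::ab_group_add \<Rightarrow> 'b::zero) \<Rightarrow> ('c \<Rightarrow> 'a) \<Rightarrow> ('a \<Rightarrow> 'a) \<Rightarrow> 'a set set" where
  "Hs bd2 bd3 q = coset (boundaries bd3) ` Zs bd2 q"

definition homology :: "('a::ab_group_add \<Rightarrow> 'b::zero) \<Rightarrow> ('c \<Rightarrow> 'a) \<Rightarrow> 'a set set" where
  "homology bd2 bd3 = quot (cycles bd2) (boundaries bd3)"

definition pure :: "('a::ab_group_add \<Rightarrow> 'b::zero) \<Rightarrow> ('c \<Rightarrow> 'a) \<Rightarrow> ('a \<Rightarrow> 'a) \<Rightarrow> bool" where
  "pure bd2 bd3 p \<longleftrightarrow>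
     Hs bd2 bd3 p \<inter> Hs bd2 bd3 (\<lambda>x. x - p x) = {coset (boundaries bd3) 0}"

definition full :: "('a::ab_group_add \<Rightarrow> 'b::zero) \<Rightarrow> ('c \<Rightarrow> 'a) \<Rightarrow> ('a \<Rightarrow> 'a) \<Rightarrow> bool" where
  "full bd2 bd3 p \<longleftrightarrow>
     {coset (boundaries bd3) (z1 + z2) | z1 z2.
        z1 \<in> Zs bd2 p \<and> z2 \<in> Zs bd2 (\<lambda>x. x - p x)} = homology bd2 bd3"

end

theory Submission
  imports Defs
begin

text \<open>Everything reduces to the single condition \<open>Z\<^sub>S \<inter> \<pi>\<^sub>S B \<subseteq> B\<close>.  Injectivity of
  \<open>\<iota>\<^sub>S\<close> says exactly that a cycle of type S which is the projection of a boundary is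
  itself a boundary (the boundaries of type S are the boundaries fixed by \<open>\<pi>\<^sub>S\<close>).  Purity
  says the same: a class in \<open>H\<^sub>S \<inter> H\<^sub>S'\<close> is represented by \<open>z \<equiv> z' (mod B)\<close> with z of type
  S and z' of the complementary type, and applying \<open>\<pi>\<^sub>S\<close> to the boundary \<open>z - z'\<close> gives z.
  As purity is symmetric in the two types, so is injectivity.  If J is full, every cycle is
  \<open>z\<^sub>1 + z\<^sub>2 + b\<close> with \<open>z\<^sub>i\<close> of pure type and b a boundary, so its projection
  \<open>z\<^sub>1 + \<pi>\<^sub>S b\<close> lies in the image of \<open>\<iota>\<^sub>S\<close>.\<close>

lemma coset_eq_iff:
  assumes "subspace U"
  shows "coset U x = coset U y \<longleftrightarrow> x - y \<in> U"
proof
  assume "coset U x = coset U y"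
  moreover have "x \<in> coset U x"
    unfolding coset_def using subspace_0[OF assms] by force
  ultimately obtain u where "u \<in> U" "x = y + u"
    unfolding coset_def by auto
  then show "x - y \<in> U" by simp
next
  assume xy: "x - y \<in> U"
  show "coset U x = coset U y"
    unfolding coset_def
  proof safe
    fix u assume "u \<in> U"
    then show "\<exists>v. x + u = y + v \<and> v \<in> U"
      by (intro exI[of _ "(x - y) + u"]) (auto simp: xy subspace_add[OF assms])
  next
    fix u assume "u \<in> U"
    then show "\<exists>v. y + u = x + v \<and> v \<in> U"
      by (intro exI[of _ "u - (x - y)"]) (auto simp: xy subspace_diff[OF assms])
  qed
qed

lemma setplus_coset_subspace:
  assumes "subspace V" and "U \<subseteq> V" and "0 \<in> U"
  shows "setplus (coset U z) V = coset V z"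
proof safe
  fix x assume "x \<in> setplus (coset U z) V"
  then obtain u v where "x = z + (u + v)" "u \<in> U" "v \<in> V"
    unfolding setplus_def coset_def by (auto simp: add.assoc)
  then show "x \<in> coset V z"
    unfolding coset_def using assms(2) subspace_add[OF assms(1)] by blast
next
  fix x assume "x \<in> coset V z"
  then obtain v where "x = (z + 0) + v" "v \<in> V"
    unfolding coset_def by auto
  then show "x \<in> setplus (coset U z) V"
    unfolding setplus_def coset_def using assms(3) by blast
qed

lemma complement_complement: "(\<lambda>x. x - (x - q x)) = (q :: 'a::ab_group_add \<Rightarrow> 'a)"
  by simp

lemma pure_complement: "pure bd2 bd3 (\<lambda>x. x - q x) \<longleftrightarrow> pure bd2 bd3 q"
  unfolding pure_def complement_complement by (simp only: Int_commute)

lemma full_complement: "full bd2 bd3 (\<lambda>x. x - q x) \<longleftrightarrow> full bd2 bd3 q"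
proof -
  have swap: "{coset B (z1 + z2) | z1 z2. z1 \<in> A \<and> z2 \<in> C} = {coset B (z1 + z2) | z1 z2. z1 \<in> C \<and> z2 \<in> A}"
    for A B C :: "'a set"
    by (metis add.commute)
  show ?thesis
    unfolding full_def complement_complement by (subst swap) (rule refl)
qed

locale projected_complex =
  fixes bd3 :: "'c::real_vector \<Rightarrow> 'a::real_vector"
    and bd2 :: "'a \<Rightarrow> 'b::real_vector"
    and q :: "'a \<Rightarrow> 'a"
  assumes linear_bd3: "linear bd3"
    and linear_bd2: "linear bd2"
    and bd2_bd3: "\<And>x. bd2 (bd3 x) = 0"
    and linear_q: "linear q"
    and q_idem: "\<And>x. q (q x) = q x"
begin

lemma projected_complex_complement: "projected_complex bd3 bd2 (\<lambda>x. x - q x)"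
proof (rule projected_complex.intro)
  show "linear (\<lambda>x. x - q x)"
    using linear_q by (simp add: linear_compose_sub linear_id[unfolded id_def])
  show "\<And>x. x - q x - q (x - q x) = x - q x"
    by (simp add: linear_diff[OF linear_q] q_idem)
qed (simp_all add: linear_bd3 linear_bd2 bd2_bd3)

lemma subspace_boundaries: "subspace (boundaries bd3)"
  unfolding boundaries_def by (rule linear_subspace_image[OF linear_bd3 subspace_UNIV])

lemma subspace_projected_boundaries: "subspace (q ` boundaries bd3)"
  by (rule linear_subspace_image[OF linear_q subspace_boundaries])

lemma subspace_Zs: "subspace (Zs bd2 q)"
proof -
  have "linear (\<lambda>x. q x - x)"
    using linear_q by (simp add: linear_compose_sub linear_id[unfolded id_def])
  then have "subspace ({z. bd2 z = 0} \<inter> {z. q z - z = 0})"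
    by (intro subspace_inter linear_subspace_kernel linear_bd2)
  then show ?thesis
    unfolding Zs_def cycles_def by (simp add: Int_def)
qed

lemma boundaries_subset_cycles: "boundaries bd3 \<subseteq> cycles bd2"
  unfolding boundaries_def cycles_def using bd2_bd3 by auto

lemma Bs_subset_projected_boundaries: "Bs bd3 q \<subseteq> q ` boundaries bd3"
  unfolding Bs_def by (auto intro: rev_image_eqI)

lemma q_Zs_complement: "z \<in> Zs bd2 (\<lambda>x. x - q x) \<Longrightarrow> q z = 0"
  unfolding Zs_def by (simp add: diff_eq_eq)

lemma iota_coset: "iota bd3 q (coset (Bs bd3 q) z) = coset (q ` boundaries bd3) z"
proof -
  have "0 \<in> Bs bd3 q"
    unfolding Bs_def using subspace_0[OF subspace_boundaries] linear_0[OF linear_q] by simp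
  then show ?thesis
    unfolding iota_def
    by (rule setplus_coset_subspace[OF subspace_projected_boundaries Bs_subset_projected_boundaries])
qed

lemma subspace_Bs: "subspace (Bs bd3 q)"
proof -
  have "Bs bd3 q = Zs bd2 q \<inter> boundaries bd3"
    unfolding Zs_def Bs_def using boundaries_subset_cycles by auto
  then show ?thesis
    using subspace_inter[OF subspace_Zs subspace_boundaries] by simp
qed

lemma iota_injective_iff:
  "iota_injective bd2 bd3 q \<longleftrightarrow> Zs bd2 q \<inter> q ` boundaries bd3 \<subseteq> boundaries bd3"
proof -
  have "iota_injective bd2 bd3 q \<longleftrightarrow>
      (\<forall>z1\<in>Zs bd2 q. \<forall>z2\<in>Zs bd2 q. z1 - z2 \<in> q ` boundaries bd3 \<longrightarrow> z1 - z2 \<in> Bs bd3 q)"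
    unfolding iota_injective_def iota_domain_def quot_def inj_on_def ball_simps iota_coset
      coset_eq_iff[OF subspace_projected_boundaries] coset_eq_iff[OF subspace_Bs] ..
  also have "\<dots> \<longleftrightarrow> (\<forall>z\<in>Zs bd2 q. z \<in> q ` boundaries bd3 \<longrightarrow> z \<in> Bs bd3 q)"
    using subspace_0[OF subspace_Zs] subspace_diff[OF subspace_Zs] by (metis diff_zero)
  also have "\<dots> \<longleftrightarrow> Zs bd2 q \<inter> q ` boundaries bd3 \<subseteq> boundaries bd3"
    unfolding Bs_def Zs_def by auto
  finally show ?thesis .
qed

lemma Hs_inter_complement:
  "Hs bd2 bd3 q \<inter> Hs bd2 bd3 (\<lambda>x. x - q x) = coset (boundaries bd3) ` (Zs bd2 q \<inter> q ` boundaries bd3)"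
  (is "?H \<inter> ?H' = coset ?B ` (Zs bd2 q \<inter> q ` ?B)")
proof (intro equalityI subsetI)
  fix X assume "X \<in> ?H \<inter> ?H'"
  then obtain z1 z2 where z1: "z1 \<in> Zs bd2 q" and z2: "z2 \<in> Zs bd2 (\<lambda>x. x - q x)"
    and X: "X = coset ?B z1" "X = coset ?B z2"
    unfolding Hs_def by blast
  then have "z1 - z2 \<in> ?B"
    using coset_eq_iff[OF subspace_boundaries] by blast
  moreover have "q (z1 - z2) = z1"
    using z1 q_Zs_complement[OF z2] unfolding Zs_def by (simp add: linear_diff[OF linear_q])
  ultimately show "X \<in> coset ?B ` (Zs bd2 q \<inter> q ` ?B)"
    using z1 X(1) by (metis IntI image_eqI)
next
  fix X assume "X \<in> coset ?B ` (Zs bd2 q \<inter> q ` ?B)"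
  then obtain b where b: "b \<in> ?B" and qb: "q b \<in> Zs bd2 q" and X: "X = coset ?B (q b)"
    by blast
  have "q b - b \<in> Zs bd2 (\<lambda>x. x - q x)"
    using qb b boundaries_subset_cycles subspace_diff[OF linear_subspace_kernel[OF linear_bd2]]
    unfolding Zs_def cycles_def by (auto simp: linear_diff[OF linear_q] q_idem)
  moreover have "coset ?B (q b) = coset ?B (q b - b)"
    using b by (simp add: coset_eq_iff[OF subspace_boundaries])
  ultimately show "X \<in> ?H \<inter> ?H'"
    unfolding Hs_def X using qb by blast
qed

lemma pure_iff: "pure bd2 bd3 q \<longleftrightarrow> Zs bd2 q \<inter> q ` boundaries bd3 \<subseteq> boundaries bd3"
proof -
  have "0 \<in> Zs bd2 q \<inter> q ` boundaries bd3"
    using subspace_0[OF subspace_Zs] subspace_0[OF subspace_projected_boundaries] by blast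
  then show ?thesis
    unfolding pure_def Hs_inter_complement
    using coset_eq_iff[OF subspace_boundaries, of _ 0] by auto
qed

lemma iota_surjective_if_full:
  assumes "full bd2 bd3 q"
  shows "iota_surjective bd2 bd3 q"
proof -
  let ?B = "boundaries bd3" and ?C = "coset (q ` boundaries bd3)"
  have "?C ` Zs bd2 q = ?C ` q ` cycles bd2"
  proof safe
    fix z assume "z \<in> Zs bd2 q"
    then have "z \<in> q ` cycles bd2"
      unfolding Zs_def by (auto intro: rev_image_eqI)
    then show "?C z \<in> ?C ` q ` cycles bd2" by (rule imageI)
  next
    fix z assume "z \<in> cycles bd2"
    then have "coset ?B z \<in> homology bd2 bd3"
      unfolding homology_def quot_def by (rule imageI)
    then obtain z1 z2 where z1: "z1 \<in> Zs bd2 q" and z2: "z2 \<in> Zs bd2 (\<lambda>x. x - q x)"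
      and "coset ?B z = coset ?B (z1 + z2)"
      using assms unfolding full_def by blast
    then have "z - (z1 + z2) \<in> ?B"
      by (simp add: coset_eq_iff[OF subspace_boundaries])
    moreover have "q (z - (z1 + z2)) = q z - z1"
      using z1 q_Zs_complement[OF z2] unfolding Zs_def
      by (simp add: linear_diff[OF linear_q] linear_add[OF linear_q])
    ultimately have "?C (q z) = ?C z1"
      by (metis coset_eq_iff[OF subspace_projected_boundaries] image_eqI)
    then show "?C (q z) \<in> ?C ` Zs bd2 q"
      using z1 by simp
  qed
  then show ?thesis
    unfolding iota_surjective_def iota_domain_def iota_codomain_def quot_def image_image iota_coset .
qed

end

theorem lemma2p18:
  fixes bd3 :: "'c::real_vector \<Rightarrow> 'a::real_vector"
    and bd2 :: "'a \<Rightarrow> 'b::real_vector"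
    and p :: "'a \<Rightarrow> 'a"
  assumes "linear bd3" and "linear bd2" and "\<And>x. bd2 (bd3 x) = 0"
    and "linear p" and "\<And>x. p (p x) = p x"
  shows "(pure bd2 bd3 p \<longleftrightarrow> iota_injective bd2 bd3 p)
       \<and> (iota_injective bd2 bd3 p \<longleftrightarrow> iota_injective bd2 bd3 (\<lambda>x. x - p x))
       \<and> (full bd2 bd3 p \<longrightarrow>
            iota_surjective bd2 bd3 p \<and> iota_surjective bd2 bd3 (\<lambda>x. x - p x))
       \<and> (pure bd2 bd3 p \<and> full bd2 bd3 p \<longrightarrow>
            iota_iso bd2 bd3 p \<and> iota_iso bd2 bd3 (\<lambda>x. x - p x))"
proof -
  interpret P: projected_complex bd3 bd2 p
    by (rule projected_complex.intro) (fact assms)+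
  interpret Q: projected_complex bd3 bd2 "\<lambda>x. x - p x"
    by (rule P.projected_complex_complement)
  have inj_p: "pure bd2 bd3 p \<longleftrightarrow> iota_injective bd2 bd3 p"
    using P.pure_iff P.iota_injective_iff by simp
  have inj_q: "pure bd2 bd3 p \<longleftrightarrow> iota_injective bd2 bd3 (\<lambda>x. x - p x)"
    using Q.pure_iff Q.iota_injective_iff pure_complement[of bd2 bd3 p] by simp
  have "full bd2 bd3 p \<Longrightarrow> iota_surjective bd2 bd3 p \<and> iota_surjective bd2 bd3 (\<lambda>x. x - p x)"
    using P.iota_surjective_if_full Q.iota_surjective_if_full full_complement[of bd2 bd3 p] by blast
  then show ?thesis
    using inj_p inj_q unfolding iota_iso_def by blast
qed

end
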